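(* Let $(X,\ast,u,d)$ be a finite block GL-rack, let $\Delta=\alpha_1\cdots\alpha_n$ be the disjoint cycle decomposition of its diagonal map (fixed points counted as cycles of length $1$), let $A_i=\operatorname{supp}(\alpha_i)$, and let $c=|A_i|$ (the common length). Then: (1) $x\ast y=x\ast y'$ for all $i,j$, all $x\in A_i$ and all $y,y'\in A_j$; (2) $x\ast y\neq x'\ast y$ for all $i,j$, all $x\neq x'\in A_i$ and all $y\in A_j$. Consequently, for all $i,j\in\{1,\dots,n\}$ there is $k\in\{1,\dots,n\}$ with $A_i\ast A_j:=\{x\ast y: x\in A_i,y\in A_j\}=A_k$, and in particular $A_i\ast A_i=A_i$ for every $i$.
   Context: A rack is a set $X$ with a binary operation $\ast$ such that for every $y\in X$ the map $x\mapsto x\ast y$ is a bijection of $X$ and $(x\ast y)\ast z=(x\ast z)\ast(y\ast z)$ for all $x,y,z$. A GL-rack is a quadruple $(X,\ast,u,d)$ where $(X,\ast)$ is a rack and $u,d\colon X\to X$ are maps such that for all $x,y\in X$: $u(d(x\ast x))=d(u(x\ast x))=x$; $u(x\ast y)=u(x)\ast y$ and $d(x\ast y)=d(x)\ast y$; $x\ast u(y)=x\ast d(y)=x\ast y$. The diagonal map is $\Delta\colon X\to X$, $\Delta(x)=x\ast x$; for a finite GL-rack it is a bijection (a rack automorphism) and $\Delta=(u\circ d)^{-1}$. A finite GL-rack is a block GL-rack if all cycles in the disjoint cycle decomposition of the permutation $\Delta$ (including cycles of length $1$) have the same length. *)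

theory Defs
  imports Main
begin

definition rack :: "('a \<Rightarrow> 'a \<Rightarrow> 'a) \<Rightarrow> bool" where
  "rack op \<longleftrightarrow> (\<forall>y. bij (\<lambda>x. op x y)) \<and>
     (\<forall>x y z. op (op x y) z = op (op x z) (op y z))"

definition gl_rack :: "('a \<Rightarrow> 'a \<Rightarrow> 'a) \<Rightarrow> ('a \<Rightarrow> 'a) \<Rightarrow> ('a \<Rightarrow> 'a) \<Rightarrow> bool" where
  "gl_rack op u d \<longleftrightarrow> rack op \<and>
     (\<forall>x. u (d (op x x)) = x \<and> d (u (op x x)) = x) \<and>
     (\<forall>x y. u (op x y) = op (u x) y \<and> d (op x y) = op (d x) y) \<and>
     (\<forall>x y. op x (u y) = op x y \<and> op x (d y) = op x y)"

definition diag :: "('a \<Rightarrow> 'a \<Rightarrow> 'a) \<Rightarrow> 'a \<Rightarrow> 'a" where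
  "diag op x = op x x"

definition diag_cycle :: "('a \<Rightarrow> 'a \<Rightarrow> 'a) \<Rightarrow> 'a \<Rightarrow> 'a set" where
  "diag_cycle op x = {(diag op ^^ k) x | k. True}"

text \<open>Supports of all cycles (including fixed points) of the disjoint cycle decomposition.\<close>
definition diag_cycles :: "('a \<Rightarrow> 'a \<Rightarrow> 'a) \<Rightarrow> 'a set set" where
  "diag_cycles op = range (diag_cycle op)"

definition block_gl_rack :: "('a::finite \<Rightarrow> 'a \<Rightarrow> 'a) \<Rightarrow> ('a \<Rightarrow> 'a) \<Rightarrow> ('a \<Rightarrow> 'a) \<Rightarrow> bool" where
  "block_gl_rack op u d \<longleftrightarrow> gl_rack op u d \<and>
     (\<forall>A\<in>diag_cycles op. \<forall>B\<in>diag_cycles op. card A = card B)"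

definition set_op :: "('a \<Rightarrow> 'a \<Rightarrow> 'a) \<Rightarrow> 'a set \<Rightarrow> 'a set \<Rightarrow> 'a set" where
  "set_op op A B = {op x y | x y. x \<in> A \<and> y \<in> B}"

end

theory Submission
  imports Defs
begin

text \<open>Self-distributivity gives \<open>x \<ast> (y \<ast> y) = x \<ast> y\<close> and
  \<open>(x \<ast> y) \<ast> (x \<ast> y) = (x \<ast> x) \<ast> y\<close>: the product \<open>x \<ast> y\<close> depends only on the cycle of \<open>y\<close>,
  and \<open>\<Delta>\<close> commutes with right translations. Hence the product of the cycles of \<open>a\<close> and \<open>b\<close>
  is the cycle of \<open>a \<ast> b\<close>. For \<open>a = b\<close> this is the cycle of \<open>\<Delta> a\<close>, which is the cycle of \<open>a\<close>
  because \<open>\<Delta>\<close> has the left inverse \<open>u \<circ> d\<close> and is therefore a permutation of the finite set.\<close>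

lemma rack_self_distrib:
  assumes "rack op"
  shows "op (op x y) z = op (op x z) (op y z)"
  using assms unfolding rack_def by blast

lemma rack_right_inj:
  assumes "rack op" and "op x y = op x' y"
  shows "x = x'"
  using assms unfolding rack_def by (metis bij_is_inj injD)

lemma rack_right_surj:
  assumes "rack op"
  obtains w where "x = op w y"
  using assms unfolding rack_def by (metis bij_is_surj surjD)

lemma rack_right_diag:
  assumes "rack op"
  shows "op x (diag op y) = op x y"
proof -
  obtain w where w: "x = op w y" using rack_right_surj[OF assms] .
  show ?thesis
    unfolding w diag_def using rack_self_distrib[OF assms, of w y y] by simp
qed

lemma rack_right_diag_funpow:
  assumes "rack op"
  shows "op x ((diag op ^^ k) y) = op x y"
  by (induction k) (simp_all add: rack_right_diag[OF assms])

lemma rack_diag_left: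
  assumes "rack op"
  shows "diag op (op x y) = op (diag op x) y"
  unfolding diag_def using rack_self_distrib[OF assms] by metis

lemma rack_diag_funpow_left:
  assumes "rack op"
  shows "(diag op ^^ k) (op x y) = op ((diag op ^^ k) x) y"
  by (induction k) (simp_all add: rack_diag_left[OF assms])

lemma rack_right_const_on_diag_cycle:
  assumes "rack op" and "y \<in> diag_cycle op b" and "y' \<in> diag_cycle op b"
  shows "op x y = op x y'"
  using assms(2,3) unfolding diag_cycle_def by (auto simp: rack_right_diag_funpow[OF assms(1)])

lemma set_op_diag_cycle:
  assumes "rack op"
  shows "set_op op (diag_cycle op a) (diag_cycle op b) = diag_cycle op (op a b)"
proof
  show "set_op op (diag_cycle op a) (diag_cycle op b) \<subseteq> diag_cycle op (op a b)"
    unfolding set_op_def diag_cycle_def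
    by (auto simp: rack_right_diag_funpow[OF assms] rack_diag_funpow_left[OF assms, symmetric])
next
  have "(diag op ^^ k) (op a b) = op ((diag op ^^ k) a) ((diag op ^^ 0) b)" for k
    by (simp add: rack_diag_funpow_left[OF assms])
  then show "diag_cycle op (op a b) \<subseteq> set_op op (diag_cycle op a) (diag_cycle op b)"
    unfolding set_op_def diag_cycle_def by blast
qed

lemma gl_rack_inj_diag:
  assumes "gl_rack op u d"
  shows "inj (diag op)"
proof (rule inj_on_inverseI)
  show "u (d (diag op x)) = x" for x
    using assms unfolding gl_rack_def diag_def by blast
qed

lemma inj_funpow_orbit_of_image:
  fixes f :: "'a::finite \<Rightarrow> 'a"
  assumes "inj f"
  shows "{(f ^^ k) (f a) | k. True} = {(f ^^ k) a | k. True}"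
proof
  have "(f ^^ k) (f a) = (f ^^ Suc k) a" for k
    by (simp only: funpow_Suc_right comp_def)
  then show "{(f ^^ k) (f a) | k. True} \<subseteq> {(f ^^ k) a | k. True}" by blast
next
  obtain n where n: "n > 0" "(f ^^ n) a = a"
    by (rule funpow_inj_finite[OF assms finite])
  have "(f ^^ k) a = (f ^^ (k + n - 1)) (f a)" for k
  proof -
    have "(f ^^ k) a = (f ^^ (Suc (k + n - 1))) a"
      using n by (simp add: funpow_add)
    then show ?thesis by (simp only: funpow_Suc_right comp_def)
  qed
  then show "{(f ^^ k) a | k. True} \<subseteq> {(f ^^ k) (f a) | k. True}" by blast
qed

lemma gl_rack_diag_cycle_diag:
  fixes op :: "'a::finite \<Rightarrow> 'a \<Rightarrow> 'a"
  assumes "gl_rack op u d"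
  shows "diag_cycle op (diag op a) = diag_cycle op a"
  unfolding diag_cycle_def using inj_funpow_orbit_of_image[OF gl_rack_inj_diag[OF assms]] .

theorem proposition3p3:
  fixes op :: "'a::finite \<Rightarrow> 'a \<Rightarrow> 'a" and u d :: "'a \<Rightarrow> 'a"
  assumes "block_gl_rack op u d"
  shows "(\<forall>A\<in>diag_cycles op. \<forall>B\<in>diag_cycles op. \<forall>x\<in>A. \<forall>y\<in>B. \<forall>y'\<in>B. op x y = op x y')
    \<and> (\<forall>A\<in>diag_cycles op. \<forall>B\<in>diag_cycles op. \<forall>x\<in>A. \<forall>x'\<in>A. \<forall>y\<in>B.
          x \<noteq> x' \<longrightarrow> op x y \<noteq> op x' y)
    \<and> (\<forall>A\<in>diag_cycles op. \<forall>B\<in>diag_cycles op. \<exists>C\<in>diag_cycles op. set_op op A B = C)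
    \<and> (\<forall>A\<in>diag_cycles op. set_op op A A = A)"
proof -
  have gl: "gl_rack op u d" using assms unfolding block_gl_rack_def by blast
  then have r: "rack op" unfolding gl_rack_def by blast
  show ?thesis
  proof (intro conjI ballI impI)
    fix A B assume "A \<in> diag_cycles op" "B \<in> diag_cycles op"
    then obtain a b where A: "A = diag_cycle op a" and B: "B = diag_cycle op b"
      unfolding diag_cycles_def by blast
    show "op x y = op x y'" if "y \<in> B" "y' \<in> B" for x y y'
      using rack_right_const_on_diag_cycle[OF r] that B by blast
    show "op x y \<noteq> op x' y" if "x \<noteq> x'" for x x' y
      using rack_right_inj[OF r, of x y x'] that by blast
    show "\<exists>C\<in>diag_cycles op. set_op op A B = C"
      unfolding A B set_op_diag_cycle[OF r] diag_cycles_def by blast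
  next
    fix A assume "A \<in> diag_cycles op"
    then obtain a where A: "A = diag_cycle op a" unfolding diag_cycles_def by blast
    show "set_op op A A = A"
      unfolding A set_op_diag_cycle[OF r] using gl_rack_diag_cycle_diag[OF gl]
      by (simp add: diag_def)
  qed
qed

end
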